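(* Let $\theta(x,y)$ be the formula $y+x=x\to y=0$. Then $\mathcal{T}+\mathrm{IND}(\mathrm{Open}^-(\mathcal{T}))\nvdash\theta(x,x)$.
   Context: Language $\{0/0,s/1,p/1,+/2\}$; $\mathcal{T}$ has axioms (universally closed) $0\neq s(x)$, $p(0)=0$, $p(s(x))=x$, $x+0=x$, $x+s(y)=s(x+y)$. $\mathrm{Open}^-(\mathcal{T})$ is the set of quantifier-free formulas of this language having at most one free variable. $I_x\varphi=\forall\vec z(\varphi(0,\vec z)\wedge\forall x(\varphi(x,\vec z)\to\varphi(s(x),\vec z))\to\forall x\varphi(x,\vec z))$ and $\mathrm{IND}(\Gamma)=\{I_x\gamma:\gamma\in\Gamma\}$ (so here induction formulas have no parameters). *)

theory Defs
  imports Main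
begin

datatype tm = Var nat | Zero | S tm | P tm | Plus tm tm

datatype fm = Falsum | Eq tm tm | Imp fm fm | All nat fm

definition Neg :: "fm \<Rightarrow> fm" where "Neg a = Imp a Falsum"
definition And :: "fm \<Rightarrow> fm \<Rightarrow> fm" where "And a b = Neg (Imp a (Neg b))"

fun fvt :: "tm \<Rightarrow> nat set" where
  "fvt (Var x) = {x}"
| "fvt Zero = {}"
| "fvt (S t) = fvt t"
| "fvt (P t) = fvt t"
| "fvt (Plus t u) = fvt t \<union> fvt u"

fun fv :: "fm \<Rightarrow> nat set" where
  "fv Falsum = {}"
| "fv (Eq t u) = fvt t \<union> fvt u"
| "fv (Imp a b) = fv a \<union> fv b"
| "fv (All x a) = fv a - {x}"

fun qfree :: "fm \<Rightarrow> bool" where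
  "qfree Falsum = True"
| "qfree (Eq t u) = True"
| "qfree (Imp a b) = (qfree a \<and> qfree b)"
| "qfree (All x a) = False"

text \<open>Substitution of a term for the free occurrences of a variable
(naive; used only under the side condition \<open>substitutable\<close>).\<close>

fun substt :: "nat \<Rightarrow> tm \<Rightarrow> tm \<Rightarrow> tm" where
  "substt x r (Var y) = (if y = x then r else Var y)"
| "substt x r Zero = Zero"
| "substt x r (S t) = S (substt x r t)"
| "substt x r (P t) = P (substt x r t)"
| "substt x r (Plus t u) = Plus (substt x r t) (substt x r u)"

fun subst :: "nat \<Rightarrow> tm \<Rightarrow> fm \<Rightarrow> fm" where
  "subst x r Falsum = Falsum"
| "subst x r (Eq t u) = Eq (substt x r t) (substt x r u)"
| "subst x r (Imp a b) = Imp (subst x r a) (subst x r b)"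
| "subst x r (All y a) = (if y = x then All y a else All y (subst x r a))"

fun substitutable :: "tm \<Rightarrow> nat \<Rightarrow> fm \<Rightarrow> bool" where
  "substitutable r x Falsum = True"
| "substitutable r x (Eq t u) = True"
| "substitutable r x (Imp a b) = (substitutable r x a \<and> substitutable r x b)"
| "substitutable r x (All y a) =
     (x \<notin> fv (All y a) \<or> (y \<notin> fvt r \<and> substitutable r x a))"

fun alls :: "nat list \<Rightarrow> fm \<Rightarrow> fm" where
  "alls [] a = a"
| "alls (x # xs) a = All x (alls xs a)"

inductive proves :: "fm set \<Rightarrow> fm \<Rightarrow> bool" where
  Ax: "a \<in> \<Gamma> \<Longrightarrow> proves \<Gamma> a"
| K: "proves \<Gamma> (Imp a (Imp b a))"
| Sdist: "proves \<Gamma> (Imp (Imp a (Imp b c)) (Imp (Imp a b) (Imp a c)))"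
| DNeg: "proves \<Gamma> (Imp (Neg (Neg a)) a)"
| Inst: "substitutable t x a \<Longrightarrow> proves \<Gamma> (Imp (All x a) (subst x t a))"
| AllImp: "x \<notin> fv a \<Longrightarrow> proves \<Gamma> (Imp (All x (Imp a b)) (Imp a (All x b)))"
| Refl: "proves \<Gamma> (Eq (Var x) (Var x))"
| Leib: "substitutable (Var y) x a \<Longrightarrow>
           proves \<Gamma> (Imp (Eq (Var x) (Var y)) (Imp a (subst x (Var y) a)))"
| MP: "proves \<Gamma> (Imp a b) \<Longrightarrow> proves \<Gamma> a \<Longrightarrow> proves \<Gamma> b"
| Gen: "proves \<Gamma> a \<Longrightarrow> proves \<Gamma> (All x a)"

definition T :: "fm set" where
  "T = { All 0 (Neg (Eq Zero (S (Var 0)))),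
         Eq (P Zero) Zero,
         All 0 (Eq (P (S (Var 0))) (Var 0)),
         All 0 (Eq (Plus (Var 0) Zero) (Var 0)),
         All 0 (All 1 (Eq (Plus (Var 0) (S (Var 1))) (S (Plus (Var 0) (Var 1))))) }"

definition OpenMinus :: "fm set" where
  "OpenMinus = {a. qfree a \<and> card (fv a) \<le> 1}"

definition Ind :: "nat \<Rightarrow> fm \<Rightarrow> fm" where
  "Ind x a = alls (sorted_list_of_set (fv a - {x}))
      (Imp (And (subst x Zero a) (All x (Imp a (subst x (S (Var x)) a)))) (All x a))"

definition IND :: "fm set \<Rightarrow> fm set" where
  "IND \<Gamma> = {Ind x a | x a. a \<in> \<Gamma>}"

definition theta :: "tm \<Rightarrow> tm \<Rightarrow> fm" where
  "theta x y = Imp (Eq (Plus y x) x) (Eq y Zero)"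

end

theory Submission
  imports Defs
begin

text \<open>The countermodel is \<open>\<nat>\<close> followed by a copy of \<open>\<int>\<close>, with the element \<open>0\<close> of the
\<open>\<int>\<close>-chain satisfying \<open>x + x = x \<noteq> 0\<close>. Under a constant assignment every term is
either a standard numeral or an affine function \<open>a\<cdot>v + b\<close> of the value \<open>v\<close>, with the same
coefficients on \<open>\<nat>\<close> (for large \<open>v\<close>) as on \<open>\<int>\<close> (for very negative \<open>v\<close>). Hence a
one-variable open formula has one truth value far out in \<open>\<nat>\<close> and far down in \<open>\<int>\<close>. If it
satisfies the premises of induction, it holds on all of \<open>\<nat>\<close>, so this limit value is true,
so it holds far down in \<open>\<int>\<close> and then, by the induction step, on the whole \<open>\<int>\<close>-chain.\<close>

record 'a interp =
  izero :: 'a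
  isucc :: "'a \<Rightarrow> 'a"
  ipred :: "'a \<Rightarrow> 'a"
  iplus :: "'a \<Rightarrow> 'a \<Rightarrow> 'a"

fun evalt :: "'a interp \<Rightarrow> (nat \<Rightarrow> 'a) \<Rightarrow> tm \<Rightarrow> 'a" where
  "evalt I e (Var x) = e x"
| "evalt I e Zero = izero I"
| "evalt I e (S t) = isucc I (evalt I e t)"
| "evalt I e (P t) = ipred I (evalt I e t)"
| "evalt I e (Plus t u) = iplus I (evalt I e t) (evalt I e u)"

fun eval :: "'a interp \<Rightarrow> (nat \<Rightarrow> 'a) \<Rightarrow> fm \<Rightarrow> bool" where
  "eval I e Falsum = False"
| "eval I e (Eq t u) = (evalt I e t = evalt I e u)"
| "eval I e (Imp a b) = (eval I e a \<longrightarrow> eval I e b)"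
| "eval I e (All x a) = (\<forall>v. eval I (e(x := v)) a)"

lemma evalt_cong: "(\<And>z. z \<in> fvt t \<Longrightarrow> e z = e' z) \<Longrightarrow> evalt I e t = evalt I e' t"
  by (induction t) auto

lemma eval_cong: "(\<And>z. z \<in> fv a \<Longrightarrow> e z = e' z) \<Longrightarrow> eval I e a = eval I e' a"
proof (induction a arbitrary: e e')
  case (Eq t u)
  then show ?case using evalt_cong[of t e e' I] evalt_cong[of u e e' I] by auto
next
  case (Imp a b)
  then show ?case by (metis UnCI eval.simps(3) fv.simps(3))
next
  case (All x a)
  then have "eval I (e(x := v)) a = eval I (e'(x := v)) a" for v
    by (intro All.IH) auto
  then show ?case by simp
qed simp

lemma substt_not_free: "x \<notin> fvt t \<Longrightarrow> substt x r t = t"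
  by (induction t) auto

lemma subst_not_free: "x \<notin> fv a \<Longrightarrow> subst x r a = a"
  by (induction a) (auto simp: substt_not_free)

lemma evalt_substt: "evalt I e (substt x r t) = evalt I (e(x := evalt I e r)) t"
  by (induction t) auto

lemma eval_subst:
  "substitutable r x a \<Longrightarrow> eval I e (subst x r a) = eval I (e(x := evalt I e r)) a"
proof (induction a arbitrary: e)
  case (Eq t u)
  then show ?case by (simp only: subst.simps eval.simps evalt_substt)
next
  case (All y a)
  consider "y = x" | "y \<noteq> x" "x \<notin> fv (All y a)" | "y \<noteq> x" "y \<notin> fvt r" "substitutable r x a"
    using All.prems by auto
  then show ?case
  proof cases
    case 1
    then show ?thesis by (simp del: fun_upd_apply)
  next
    case 2
    then have "eval I (e(x := evalt I e r)) (All y a) = eval I e (All y a)"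
      by (intro eval_cong) auto
    with 2 show ?thesis by (simp add: subst_not_free del: fun_upd_apply)
  next
    case 3
    have "eval I (e(y := v)) (subst x r a) = eval I (e(x := evalt I e r, y := v)) a" for v
    proof -
      have "eval I (e(y := v)) (subst x r a) = eval I (e(y := v, x := evalt I (e(y := v)) r)) a"
        by (rule All.IH[OF 3(3)])
      also have "evalt I (e(y := v)) r = evalt I e r"
        using 3 by (intro evalt_cong) auto
      also have "e(y := v, x := evalt I e r) = e(x := evalt I e r, y := v)"
        using 3(1) by (simp add: fun_upd_twist)
      finally show ?thesis .
    qed
    with 3 show ?thesis by (simp del: fun_upd_apply)
  qed
qed auto

theorem proves_sound:
  "proves \<Gamma> a \<Longrightarrow> (\<And>b e. b \<in> \<Gamma> \<Longrightarrow> eval I e b) \<Longrightarrow> eval I e a"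
proof (induction arbitrary: e rule: proves.induct)
  case (DNeg \<Gamma> a)
  then show ?case by (simp add: Neg_def)
next
  case (Inst t x a \<Gamma>)
  then show ?case by (simp add: eval_subst)
next
  case (AllImp x a \<Gamma> b)
  then show ?case by simp (metis eval_cong fun_upd_other)
next
  case (Leib y x a \<Gamma>)
  have "eval I e (subst x (Var y) a)" if "e x = e y" "eval I e a"
  proof -
    have "e(x := e y) = e" using that(1) by auto
    then show ?thesis using eval_subst[OF Leib(1), of I e] that(2) by simp
  qed
  then show ?case by simp
qed auto

lemma eval_alls: "(\<And>e. eval I e a) \<Longrightarrow> eval I e (alls xs a)"
  by (induction xs arbitrary: e) auto

lemma qfree_substitutable: "qfree a \<Longrightarrow> substitutable r x a"
  by (induction a) auto

lemma eval_induction_matrix: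
  assumes "qfree a"
  shows "eval I e (Imp (And (subst x Zero a) (All x (Imp a (subst x (S (Var x)) a)))) (All x a))
    \<longleftrightarrow> (eval I (e(x := izero I)) a \<and> (\<forall>v. eval I (e(x := v)) a \<longrightarrow> eval I (e(x := isucc I v)) a)
         \<longrightarrow> (\<forall>v. eval I (e(x := v)) a))"
  using assms by (simp add: And_def Neg_def eval_subst qfree_substitutable)

lemma finite_fvt: "finite (fvt t)"
  by (induction t) auto

lemma finite_fv: "finite (fv a)"
  by (induction a) (auto simp: finite_fvt)

lemma OpenMinus_fv: "a \<in> OpenMinus \<Longrightarrow> x \<in> fv a \<Longrightarrow> fv a = {x}"
  using finite_fv[of a] by (auto simp: OpenMinus_def card_le_Suc0_iff_eq)

datatype nz = Std nat | Nonstd int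

fun succ_nz :: "nz \<Rightarrow> nz" where
  "succ_nz (Std n) = Std (n + 1)"
| "succ_nz (Nonstd k) = Nonstd (k + 1)"

fun pred_nz :: "nz \<Rightarrow> nz" where
  "pred_nz (Std n) = Std (n - 1)"
| "pred_nz (Nonstd k) = Nonstd (k - 1)"

fun plus_nz :: "nz \<Rightarrow> nz \<Rightarrow> nz" where
  "plus_nz (Std m) (Std n) = Std (m + n)"
| "plus_nz (Std m) (Nonstd k) = Nonstd (int m + k)"
| "plus_nz (Nonstd k) (Std n) = Nonstd (k + int n)"
| "plus_nz (Nonstd k) (Nonstd l) = Nonstd (k + l)"

definition NZ :: "nz interp" where
  "NZ = \<lparr>izero = Std 0, isucc = succ_nz, ipred = pred_nz, iplus = plus_nz\<rparr>"

lemma NZ_simps [simp]: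
  "izero NZ = Std 0" "isucc NZ = succ_nz" "ipred NZ = pred_nz" "iplus NZ = plus_nz"
  by (simp_all add: NZ_def)

lemma T_valid_NZ:
  assumes "b \<in> T"
  shows "eval NZ e b"
proof -
  have "Std 0 \<noteq> succ_nz v" "pred_nz (succ_nz v) = v" "plus_nz v (Std 0) = v"
    "plus_nz v (succ_nz w) = succ_nz (plus_nz v w)" for v w
    by (cases v; cases w; simp)+
  with assms show ?thesis by (auto simp: T_def Neg_def)
qed

fun slope :: "tm \<Rightarrow> int" where
  "slope (Var _) = 1"
| "slope Zero = 0"
| "slope (S t) = slope t"
| "slope (P t) = slope t"
| "slope (Plus t u) = slope t + slope u"

text \<open>For a closed term (\<open>slope t = 0\<close>) the offset is its value in \<open>\<nat>\<close>, where the
predecessor of \<open>0\<close> is \<open>0\<close>.\<close>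

fun offset :: "tm \<Rightarrow> int" where
  "offset (Var _) = 0"
| "offset Zero = 0"
| "offset (S t) = offset t + 1"
| "offset (P t) = (if slope t = 0 then max 0 (offset t - 1) else offset t - 1)"
| "offset (Plus t u) = offset t + offset u"

fun pred_count :: "tm \<Rightarrow> int" where
  "pred_count (Var _) = 0"
| "pred_count Zero = 0"
| "pred_count (S t) = pred_count t"
| "pred_count (P t) = pred_count t + 1"
| "pred_count (Plus t u) = pred_count t + pred_count u"

lemma coefficient_bounds:
  "0 \<le> slope t \<and> (slope t = 0 \<longrightarrow> 0 \<le> offset t) \<and> - pred_count t \<le> offset t \<and> 0 \<le> pred_count t"
  by (induction t) auto

lemma evalt_Nonstd_const:
  "evalt NZ (\<lambda>_. Nonstd k) t =
    (if slope t = 0 then Std (nat (offset t)) else Nonstd (slope t * k + offset t))"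
proof (induction t)
  case (S t)
  then show ?case using coefficient_bounds[of t] by (auto simp: nat_add_distrib)
next
  case (Plus t u)
  then show ?case using coefficient_bounds[of t] coefficient_bounds[of u]
    by (auto simp: algebra_simps nat_add_distrib)
qed (use coefficient_bounds in \<open>auto simp: nat_diff_distrib'\<close>)

lemma affine_nonneg: "pred_count t \<le> int n \<Longrightarrow> 0 \<le> slope t * int n + offset t"
  using coefficient_bounds[of t] mult_le_cancel_right1[of "int n" "slope t"]
  by (cases "slope t = 0") auto

text \<open>The hypothesis keeps every predecessor inside \<open>\<nat>\<close> away from \<open>0\<close>, where the
standard predecessor stops being affine.\<close>

lemma evalt_Std_const:
  "pred_count t \<le> int n \<Longrightarrow> evalt NZ (\<lambda>_. Std n) t = Std (nat (slope t * int n + offset t))"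
proof (induction t)
  case (S t)
  then show ?case using affine_nonneg[of t n] by (auto simp: nat_add_distrib)
next
  case (P t)
  then show ?case using affine_nonneg[of t n] by (auto simp: nat_diff_distrib')
next
  case (Plus t u)
  then have "pred_count t \<le> int n" "pred_count u \<le> int n"
    using coefficient_bounds[of t] coefficient_bounds[of u] by auto
  with Plus.IH show ?case
    using affine_nonneg[of t n] affine_nonneg[of u n]
    by (simp add: algebra_simps flip: nat_add_distrib)
qed auto

lemma affine_eq_iff:
  fixes a1 a2 b1 b2 k :: int
  assumes "\<bar>b2 - b1\<bar> < \<bar>k\<bar>"
  shows "a1 * k + b1 = a2 * k + b2 \<longleftrightarrow> a1 = a2 \<and> b1 = b2"
proof (cases "a1 = a2")
  case False
  then have "1 \<le> \<bar>a1 - a2\<bar>" by linarith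
  then have "\<bar>k\<bar> \<le> \<bar>a1 - a2\<bar> * \<bar>k\<bar>"
    by (simp add: mult_le_cancel_right1)
  also have "\<dots> = \<bar>(a1 - a2) * k\<bar>"
    by (simp add: abs_mult)
  finally show ?thesis
    using assms False by (auto simp: algebra_simps)
qed simp

fun holds_at_infinity :: "fm \<Rightarrow> bool" where
  "holds_at_infinity Falsum = False"
| "holds_at_infinity (Eq t u) = (slope t = slope u \<and> offset t = offset u)"
| "holds_at_infinity (Imp a b) = (holds_at_infinity a \<longrightarrow> holds_at_infinity b)"
| "holds_at_infinity (All x a) = False"

lemma eventually_eval_Eq_Nonstd:
  "\<forall>\<^sub>F k in at_bot. eval NZ (\<lambda>_. Nonstd k) (Eq t u) = holds_at_infinity (Eq t u)"
proof (rule eventually_at_bot_linorderI)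
  fix k :: int
  assume "k \<le> - \<bar>offset u - offset t\<bar> - 1"
  then have "\<bar>offset u - offset t\<bar> < \<bar>k\<bar>" by linarith
  then show "eval NZ (\<lambda>_. Nonstd k) (Eq t u) = holds_at_infinity (Eq t u)"
    using coefficient_bounds[of t] coefficient_bounds[of u]
    by (auto simp: evalt_Nonstd_const affine_eq_iff)
qed

lemma eventually_eval_Eq_Std:
  "\<forall>\<^sub>F n in sequentially. eval NZ (\<lambda>_. Std n) (Eq t u) = holds_at_infinity (Eq t u)"
proof (rule eventually_sequentiallyI)
  fix n :: nat
  assume "nat (pred_count t + pred_count u + \<bar>offset u - offset t\<bar> + 1) \<le> n"
  then have "pred_count t \<le> int n" "pred_count u \<le> int n" "\<bar>offset u - offset t\<bar> < \<bar>int n\<bar>"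
    using coefficient_bounds[of t] coefficient_bounds[of u] by auto
  then show "eval NZ (\<lambda>_. Std n) (Eq t u) = holds_at_infinity (Eq t u)"
    using affine_nonneg[of t n] affine_nonneg[of u n]
    by (simp add: evalt_Std_const affine_eq_iff eq_nat_nat_iff)
qed

lemma eventually_eval_qfree:
  assumes "qfree a"
    and "\<And>t u. \<forall>\<^sub>F x in F. eval I (e x) (Eq t u) = holds_at_infinity (Eq t u)"
  shows "\<forall>\<^sub>F x in F. eval I (e x) a = holds_at_infinity a"
  using assms by (induction a) (auto elim: eventually_elim2)

lemma NZ_open_induction:
  assumes "qfree a"
    and zero: "eval NZ (\<lambda>_. Std 0) a"
    and succ: "\<And>v. eval NZ (\<lambda>_. v) a \<Longrightarrow> eval NZ (\<lambda>_. succ_nz v) a"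
  shows "eval NZ (\<lambda>_. v) a"
proof -
  have Std: "eval NZ (\<lambda>_. Std n) a" for n
    by (induction n) (use zero succ in force)+
  have "\<forall>\<^sub>F n in sequentially. eval NZ (\<lambda>_. Std n) a = holds_at_infinity a"
    using assms(1) eventually_eval_Eq_Std by (rule eventually_eval_qfree)
  then have limit: "holds_at_infinity a"
    using Std by (auto simp: eventually_sequentially)
  have "\<forall>\<^sub>F k in at_bot. eval NZ (\<lambda>_. Nonstd k) a = holds_at_infinity a"
    using assms(1) eventually_eval_Eq_Nonstd by (rule eventually_eval_qfree)
  then obtain k0 where below: "\<And>k. k \<le> k0 \<Longrightarrow> eval NZ (\<lambda>_. Nonstd k) a"
    using limit by (auto simp: eventually_at_bot_linorder)
  have Nonstd: "eval NZ (\<lambda>_. Nonstd k) a" for k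
  proof -
    have "min k k0 \<le> k" by simp
    then show ?thesis
    proof (induction k rule: int_ge_induct)
      case base
      then show ?case using below by simp
    next
      case (step i)
      then show ?case using succ[of "Nonstd i"] by simp
    qed
  qed
  show ?thesis using Std Nonstd by (cases v) auto
qed

lemma Ind_valid_NZ:
  assumes "a \<in> OpenMinus"
  shows "eval NZ e (Ind x a)"
proof -
  have qf: "qfree a" using assms by (simp add: OpenMinus_def)
  have main: "eval NZ (e(x := v)) a"
    if zero: "eval NZ (e(x := Std 0)) a"
      and succ: "\<forall>v. eval NZ (e(x := v)) a \<longrightarrow> eval NZ (e(x := succ_nz v)) a" for e v
  proof (cases "x \<in> fv a")
    case True
    then have "eval NZ (e(x := w)) a = eval NZ (\<lambda>_. w) a" for w
      using OpenMinus_fv[OF assms] by (intro eval_cong) auto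
    then show ?thesis using NZ_open_induction[OF qf] zero succ by simp
  next
    case False
    then have "eval NZ (e(x := v)) a = eval NZ (e(x := Std 0)) a"
      by (intro eval_cong) auto
    then show ?thesis using zero by simp
  qed
  show ?thesis
    unfolding Ind_def
    by (intro eval_alls) (use main in \<open>simp only: eval_induction_matrix[OF qf] NZ_simps, blast\<close>)
qed

theorem lemma10:
  shows "\<not> proves (T \<union> IND OpenMinus) (theta (Var 0) (Var 0))"
proof
  assume "proves (T \<union> IND OpenMinus) (theta (Var 0) (Var 0))"
  then have "eval NZ (\<lambda>_. Nonstd 0) (theta (Var 0) (Var 0))"
    by (rule proves_sound) (auto simp: IND_def T_valid_NZ Ind_valid_NZ)
  then show False by (simp add: theta_def)
qed

end
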